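(* Suppose that $(R,\mathfrak m)$ is $F$-pure and let $\mathfrak a$ be a fully $\Phi(E)$-special ideal of $R$. Then $\mathfrak a$ is radical and every associated prime of $\mathfrak a$ is fully $\Phi(E)$-special.
   Context: $(R,\mathfrak m)$ is a commutative Noetherian local ring of prime characteristic $p$. $R$ is $F$-pure if for every $R$-module $M$ the map $M\to R^{(1)}\otimes_RM$, $m\mapsto1\otimes m$, is injective ($R^{(1)}$ = $R$ with right structure via $r\mapsto r^p$). The Frobenius skew polynomial ring $R[x,f]$ consists of polynomials $\sum r_ix^i$, free left $R$-module on $(x^i)_{i\ge0}$, with $xr=r^px$. $E=E_R(R/\mathfrak m)$; $\Phi(E)=R[x,f]\otimes_RE=\bigoplus_nRx^n\otimes_RE$, with $0$th component identified with $E$. $\operatorname{ann}_{\Phi(E)}(\mathfrak aR[x,f])$ is the submodule of elements annihilated by all $rx^n$, $r\in\mathfrak a$, $n\ge0$; $\mathfrak a$ is fully $\Phi(E)$-special if $(0:_E\mathfrak a)$ is contained in the $0$th component of $\operatorname{ann}_{\Phi(E)}(\mathfrak aR[x,f])$. *)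

theory Defs
  imports "HOL-Computational_Algebra.Primes" "HOL.Modules" "HOL-Library.Function_Algebras"
begin

text \<open>Commutative ring theory for a ring given as a type of class comm_ring_1
  (the whole type is the ring R).\<close>

definition ideal :: "'a::comm_ring_1 set \<Rightarrow> bool" where
  "ideal I \<longleftrightarrow> 0 \<in> I \<and> (\<forall>x\<in>I. \<forall>y\<in>I. x + y \<in> I) \<and> (\<forall>r x. x \<in> I \<longrightarrow> r * x \<in> I)"

definition maximal_ideal :: "'a::comm_ring_1 set \<Rightarrow> bool" where
  "maximal_ideal M \<longleftrightarrow> ideal M \<and> M \<noteq> UNIV \<and>
     (\<forall>J. ideal J \<and> M \<subseteq> J \<longrightarrow> J = M \<or> J = UNIV)"

definition local_ring :: "'a::comm_ring_1 set \<Rightarrow> bool" where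
  "local_ring m \<longleftrightarrow> maximal_ideal m \<and> (\<forall>J. maximal_ideal J \<longrightarrow> J = m)"

definition noetherian_ring :: "'a::comm_ring_1 itself \<Rightarrow> bool" where
  "noetherian_ring _ \<longleftrightarrow> (\<forall>I::'a set. ideal I \<longrightarrow>
     (\<exists>S. finite S \<and> S \<subseteq> I \<and> I = {y. \<exists>c. y = (\<Sum>s\<in>S. c s * s)}))"

definition prime_ideal :: "'a::comm_ring_1 set \<Rightarrow> bool" where
  "prime_ideal P \<longleftrightarrow> ideal P \<and> P \<noteq> UNIV \<and> (\<forall>x y. x * y \<in> P \<longrightarrow> x \<in> P \<or> y \<in> P)"

definition radical_ideal :: "'a::comm_ring_1 set \<Rightarrow> bool" where
  "radical_ideal a \<longleftrightarrow> {x. \<exists>n::nat. x ^ n \<in> a} = a"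

text \<open>Associated primes of the ideal a, i.e. Ass_R(R/a): primes of the form (a : x).\<close>
definition associated_primes :: "'a::comm_ring_1 set \<Rightarrow> 'a set set" where
  "associated_primes a = {P. prime_ideal P \<and> (\<exists>x. P = {r. r * x \<in> a})}"

text \<open>Injective module (Baer's criterion form) and the injective hull E = E_R(R/m):
  an injective module containing an essential submodule R e0 with ann(e0) = m,
  i.e. an essential copy of R/m.\<close>
definition injective_module :: "('a::comm_ring_1 \<Rightarrow> 'e::ab_group_add \<Rightarrow> 'e) \<Rightarrow> bool" where
  "injective_module sc \<longleftrightarrow> module sc \<and>
     (\<forall>I (g::'a \<Rightarrow> 'e). ideal I \<and> (\<forall>x\<in>I. \<forall>y\<in>I. g (x + y) = g x + g y) \<and>
        (\<forall>r. \<forall>x\<in>I. g (r * x) = sc r (g x)) \<longrightarrow> (\<exists>e. \<forall>x\<in>I. g x = sc x e))"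

definition injective_hull_residue :: "'a::comm_ring_1 set \<Rightarrow> ('a \<Rightarrow> 'e::ab_group_add \<Rightarrow> 'e) \<Rightarrow> bool" where
  "injective_hull_residue m sc \<longleftrightarrow> injective_module sc \<and>
     (\<exists>e0. e0 \<noteq> 0 \<and> {r. sc r e0 = 0} = m \<and>
        (\<forall>N. module.subspace sc N \<and> N \<noteq> {0} \<longrightarrow> (\<exists>y\<in>N. y \<noteq> 0 \<and> (\<exists>r. y = sc r e0))))"

text \<open>Tensor products  R^(q) \<otimes>_R M, where R^(q) is R with left structure the usual one and
  right structure via r \<mapsto> r^q.  Elements are formal Z-linear combinations of pairs
  (s, m) with m \<in> M (finitely supported functions), modulo the subgroup tensor_rel
  generated by the bilinearity and balancing relations.  Two formal sums represent the
  same element of the tensor product iff their difference lies in tensor_rel.\<close>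
definition fdelta :: "'x \<Rightarrow> 'x \<Rightarrow> int" where
  "fdelta x = (\<lambda>y. if y = x then 1 else 0)"

inductive_set tensor_rel :: "nat \<Rightarrow> ('a::comm_ring_1 \<Rightarrow> 'e::ab_group_add \<Rightarrow> 'e) \<Rightarrow> 'e set
    \<Rightarrow> ('a \<times> 'e \<Rightarrow> int) set"
  for q :: nat and sc :: "'a \<Rightarrow> 'e \<Rightarrow> 'e" and M :: "'e set" where
  zero: "0 \<in> tensor_rel q sc M"
| add: "f \<in> tensor_rel q sc M \<Longrightarrow> g \<in> tensor_rel q sc M \<Longrightarrow> f + g \<in> tensor_rel q sc M"
| neg: "f \<in> tensor_rel q sc M \<Longrightarrow> - f \<in> tensor_rel q sc M"
| ladd: "m \<in> M \<Longrightarrow>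
     fdelta (s + s', m) - fdelta (s, m) - fdelta (s', m) \<in> tensor_rel q sc M"
| radd: "m \<in> M \<Longrightarrow> m' \<in> M \<Longrightarrow>
     fdelta (s, m + m') - fdelta (s, m) - fdelta (s, m') \<in> tensor_rel q sc M"
| bal: "m \<in> M \<Longrightarrow> fdelta (s * r ^ q, m) - fdelta (s, sc r m) \<in> tensor_rel q sc M"

text \<open>F-purity: for every R-module M the map M \<rightarrow> R^(1) \<otimes>_R M, m \<mapsto> 1 \<otimes> m, is injective.
  (R^(1) has right structure via r \<mapsto> r^p.)  Modules are taken with carriers in the
  type 'e (any module structure on 'e and any submodule of it).\<close>
definition F_pure :: "nat \<Rightarrow> 'a::comm_ring_1 itself \<Rightarrow> 'e::ab_group_add itself \<Rightarrow> bool" where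
  "F_pure p _ _ \<longleftrightarrow> (\<forall>(sc :: 'a \<Rightarrow> 'e \<Rightarrow> 'e). module sc \<longrightarrow>
     (\<forall>M. module.subspace sc M \<longrightarrow>
        (\<forall>x\<in>M. \<forall>y\<in>M. fdelta (1, x) - fdelta (1, y) \<in> tensor_rel p sc M \<longrightarrow> x = y)))"

text \<open>Phi(E) = \<Oplus>_n R x^n \<otimes>_R E; the bimodule R x^n is identified with
  R^(p^n) via s x^n \<mapsto> s (since x^n r = r^(p^n) x^n).  An element e of the 0th component
  (e = 1 \<otimes> e) is annihilated by r x^n iff r x^n \<otimes> e = 0 in R x^n \<otimes> E, i.e. iff
  r \<otimes> e = 0 in R^(p^n) \<otimes>_R E.\<close>
definition fully_PhiE_special :: "nat \<Rightarrow> ('a::comm_ring_1 \<Rightarrow> 'e::ab_group_add \<Rightarrow> 'e) \<Rightarrow> 'a set \<Rightarrow> bool" where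
  "fully_PhiE_special p sE a \<longleftrightarrow>
     (\<forall>e. (\<forall>r\<in>a. sE r e = 0) \<longrightarrow>
        (\<forall>n::nat. \<forall>r\<in>a. fdelta (r, e) \<in> tensor_rel (p ^ n) sE UNIV))"

end

theory Submission
  imports Defs
begin

text \<open>
  Write \<open>r \<otimes> e\<close> for the class of \<open>fdelta (r, e)\<close> in \<open>R\<^sup>(\<^sup>q\<^sup>) \<otimes> E\<close>, so that
  \<open>r s\<^sup>q \<otimes> e = r \<otimes> s e\<close>.  Injectivity of \<open>E\<close> shows that every \<open>e\<close> killed by a colon
  ideal \<open>(\<aa> : y)\<close> is of the form \<open>y e'\<close> with \<open>\<aa> e' = 0\<close>.  For an associated prime
  \<open>P = (\<aa> : y)\<close> and \<open>r \<in> P\<close> this gives \<open>r \<otimes> e = r y\<^sup>q \<otimes> e' = 0\<close>, since \<open>r y\<^sup>q \<in> \<aa>\<close>.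
  If \<open>x\<^sup>p \<in> \<aa>\<close> but \<open>x \<notin> \<aa>\<close>, then \<open>(\<aa> : x) \<subseteq> \<mm>\<close> kills the socle generator \<open>e\<^sub>0\<close> of \<open>E\<close>,
  so \<open>e\<^sub>0 = x e'\<close> and \<open>1 \<otimes> e\<^sub>0 = x\<^sup>p \<otimes> e' = 0\<close>, contradicting F-purity.  Hence \<open>\<aa>\<close> is
  closed under \<open>p\<close>-th roots, and therefore radical.  Neither Noetherianity nor the
  characteristic of \<open>R\<close> enters the argument.
\<close>

lemma ideal_zero: "ideal I \<Longrightarrow> 0 \<in> I"
  and ideal_add: "ideal I \<Longrightarrow> x \<in> I \<Longrightarrow> y \<in> I \<Longrightarrow> x + y \<in> I"
  and ideal_mult_left: "ideal I \<Longrightarrow> x \<in> I \<Longrightarrow> r * x \<in> I"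
  by (simp_all add: ideal_def)

lemma ideal_mult_right: "ideal I \<Longrightarrow> x \<in> I \<Longrightarrow> x * r \<in> I"
  by (metis ideal_mult_left mult.commute)

lemma ideal_diff:
  assumes "ideal I" "x \<in> I" "y \<in> I" shows "x - y \<in> I"
  using ideal_add[OF assms(1,2) ideal_mult_left[OF assms(1,3), of "-1"]] by simp

lemma ideal_one_iff_UNIV:
  assumes "ideal I" shows "1 \<in> I \<longleftrightarrow> I = UNIV"
  using ideal_mult_right[OF assms, of 1] by auto

lemma ideal_colon: "ideal a \<Longrightarrow> ideal {t. t * x \<in> a}"
  unfolding ideal_def by (simp add: distrib_right mult.assoc)

lemma ideal_plus_principal:
  assumes "ideal a" shows "ideal {t * y + u |t u. u \<in> a}"
  unfolding ideal_def
proof (intro conjI ballI allI impI)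
  show "0 \<in> {t * y + u |t u. u \<in> a}"
    using ideal_zero[OF assms] by (intro CollectI exI[of _ 0]) simp
next
  fix x z assume "x \<in> {t * y + u |t u. u \<in> a}" "z \<in> {t * y + u |t u. u \<in> a}"
  then obtain t1 u1 t2 u2 where "u1 \<in> a" "u2 \<in> a" "x = t1 * y + u1" "z = t2 * y + u2"
    by blast
  moreover have "x + z = (t1 + t2) * y + (u1 + u2)"
    using \<open>x = t1 * y + u1\<close> \<open>z = t2 * y + u2\<close> by (simp add: algebra_simps)
  ultimately show "x + z \<in> {t * y + u |t u. u \<in> a}"
    using ideal_add[OF assms] by blast
next
  fix r x assume "x \<in> {t * y + u |t u. u \<in> a}"
  then obtain t u where "u \<in> a" "x = t * y + u" by blast
  moreover have "r * x = (r * t) * y + r * u"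
    using \<open>x = t * y + u\<close> by (simp add: algebra_simps)
  ultimately show "r * x \<in> {t * y + u |t u. u \<in> a}"
    using ideal_mult_left[OF assms] by blast
qed

lemma ideal_Union_chain:
  assumes "C \<noteq> {}" "\<forall>I\<in>C. ideal I" "\<forall>I\<in>C. \<forall>J\<in>C. I \<subseteq> J \<or> J \<subseteq> I"
  shows "ideal (\<Union>C)"
  unfolding ideal_def
proof (intro conjI ballI allI impI)
  show "0 \<in> \<Union>C" using assms(1,2) ideal_zero by blast
next
  fix x y assume "x \<in> \<Union>C" "y \<in> \<Union>C"
  then obtain I J where "I \<in> C" "J \<in> C" "x \<in> I" "y \<in> J" by blast
  with assms(2,3) show "x + y \<in> \<Union>C" by (metis UnionI ideal_add subsetD)
next
  fix r x assume "x \<in> \<Union>C"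
  with assms(2) show "r * x \<in> \<Union>C" using ideal_mult_left by blast
qed

lemma ideal_le_maximal_ideal:
  assumes "ideal J" "J \<noteq> UNIV"
  shows "\<exists>M. maximal_ideal M \<and> J \<subseteq> M"
proof -
  let ?A = "{I. ideal I \<and> J \<subseteq> I \<and> 1 \<notin> I}"
  have "\<exists>M\<in>?A. \<forall>I\<in>?A. M \<subseteq> I \<longrightarrow> I = M"
  proof (rule subset_Zorn_nonempty)
    show "?A \<noteq> {}" using assms ideal_one_iff_UNIV by blast
  next
    fix C assume "C \<noteq> {}" "subset.chain ?A C"
    then show "\<Union>C \<in> ?A"
      using ideal_Union_chain[of C] unfolding subset.chain_def by blast
  qed
  then obtain M where M: "M \<in> ?A" "\<forall>I\<in>?A. M \<subseteq> I \<longrightarrow> I = M" by blast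
  then have "maximal_ideal M"
    unfolding maximal_ideal_def using ideal_one_iff_UNIV by blast
  with M show ?thesis by blast
qed

lemma local_ring_proper_ideal_le:
  "local_ring m \<Longrightarrow> ideal J \<Longrightarrow> J \<noteq> UNIV \<Longrightarrow> J \<subseteq> m"
  using ideal_le_maximal_ideal unfolding local_ring_def by blast

lemma tensor_rel_bal_transfer:
  assumes "fdelta (s * r ^ q, x) \<in> tensor_rel q sc M" "x \<in> M"
  shows "fdelta (s, sc r x) \<in> tensor_rel q sc M"
proof -
  have "fdelta (s * r ^ q, x) - fdelta (s, sc r x) \<in> tensor_rel q sc M"
    using assms(2) by (rule tensor_rel.bal)
  from tensor_rel.add[OF assms(1) tensor_rel.neg[OF this]] show ?thesis by simp
qed

lemma fdelta_zero_in_tensor_rel: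
  assumes "0 \<in> M" shows "fdelta (s, 0) \<in> tensor_rel q sc M"
proof -
  have "fdelta (s, 0 + 0) - fdelta (s, 0) - fdelta (s, 0) \<in> tensor_rel q sc M"
    by (rule tensor_rel.radd) (fact assms)+
  from tensor_rel.neg[OF this] show ?thesis by simp
qed

lemma F_pure_tensor_one_eq_zero:
  fixes sc :: "'a::comm_ring_1 \<Rightarrow> 'e::ab_group_add \<Rightarrow> 'e"
  assumes "F_pure p TYPE('a) TYPE('e)" "module sc"
    and "fdelta (1, x) \<in> tensor_rel p sc UNIV"
  shows "x = 0"
proof -
  have "fdelta (1, x) - fdelta (1, 0) \<in> tensor_rel p sc UNIV"
    using tensor_rel.add[OF assms(3) tensor_rel.neg[OF fdelta_zero_in_tensor_rel[OF UNIV_I]]] by simp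
  with assms(1,2) module.subspace_UNIV[OF assms(2)] show ?thesis
    unfolding F_pure_def by blast
qed

text \<open>
  The map \<open>t y + u \<mapsto> t e\<close> (\<open>u \<in> \<aa>\<close>) on the ideal \<open>R y + \<aa>\<close> is well defined because
  \<open>(\<aa> : y)\<close> kills \<open>e\<close>; Baer's criterion extends it to multiplication by some \<open>e'\<close>.
\<close>
lemma injective_module_ann_colon:
  fixes sc :: "'a::comm_ring_1 \<Rightarrow> 'e::ab_group_add \<Rightarrow> 'e"
  assumes inj: "injective_module sc" and a: "ideal a"
    and ann: "\<And>t. t * y \<in> a \<Longrightarrow> sc t e = 0"
  shows "\<exists>e'. sc y e' = e \<and> (\<forall>u\<in>a. sc u e' = 0)"
proof -
  have md: "module sc" using inj unfolding injective_module_def by blast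
  define I where "I = {t * y + u |t u. u \<in> a}"
  define g where "g z = sc (SOME t. \<exists>u\<in>a. z = t * y + u) e" for z
  have g: "g (t * y + u) = sc t e" if "u \<in> a" for t u
  proof -
    obtain t' u' where t': "u' \<in> a" "t * y + u = t' * y + u'"
      "g (t * y + u) = sc t' e"
      unfolding g_def by (metis (mono_tags, lifting) \<open>u \<in> a\<close> someI_ex)
    have "(t' - t) * y = u - u'" using t'(2) by (simp add: algebra_simps)
    then have "sc (t' - t) e = 0" using ann ideal_diff[OF a that t'(1)] by simp
    then show ?thesis using t'(3) module.scale_left_diff_distrib[OF md] by simp
  qed
  have "\<forall>x\<in>I. \<forall>z\<in>I. g (x + z) = g x + g z"
  proof (intro ballI)
    fix x z assume "x \<in> I" "z \<in> I"
    then obtain t1 u1 t2 u2 where h: "u1 \<in> a" "u2 \<in> a" "x = t1 * y + u1" "z = t2 * y + u2"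
      unfolding I_def by blast
    then have "g (x + z) = g ((t1 + t2) * y + (u1 + u2))" by (simp add: algebra_simps)
    then show "g (x + z) = g x + g z"
      using h g ideal_add[OF a] module.scale_left_distrib[OF md] by simp
  qed
  moreover have "\<forall>r. \<forall>x\<in>I. g (r * x) = sc r (g x)"
  proof (intro allI ballI)
    fix r x assume "x \<in> I"
    then obtain t u where h: "u \<in> a" "x = t * y + u" unfolding I_def by blast
    then have "g (r * x) = g ((r * t) * y + r * u)" by (simp add: algebra_simps)
    then show "g (r * x) = sc r (g x)"
      using h g ideal_mult_left[OF a] module.scale_scale[OF md] by simp
  qed
  ultimately obtain e' where e': "\<forall>x\<in>I. g x = sc x e'"
    using inj ideal_plus_principal[OF a] unfolding injective_module_def I_def by blast
  have "1 * y + 0 \<in> I" using ideal_zero[OF a] unfolding I_def by blast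
  then have "sc y e' = g (1 * y + 0)" using e' by simp
  also have "\<dots> = e" using g[OF ideal_zero[OF a], of 1] module.scale_one[OF md] by simp
  finally have "sc y e' = e" .
  moreover have "sc u e' = 0" if "u \<in> a" for u
  proof -
    have "0 * y + u \<in> I" using that unfolding I_def by blast
    then have "sc u e' = g (0 * y + u)" using e' by simp
    also have "\<dots> = 0" using g[OF that, of 0] module.scale_zero_left[OF md] by simp
    finally show ?thesis .
  qed
  ultimately show ?thesis by blast
qed

lemma fully_PhiE_special_root_closed:
  fixes sE :: "'a::comm_ring_1 \<Rightarrow> 'e::ab_group_add \<Rightarrow> 'e"
  assumes "local_ring m" "injective_hull_residue m sE" "F_pure p TYPE('a) TYPE('e)"
    and a: "ideal a" "fully_PhiE_special p sE a"
    and "x ^ p \<in> a"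
  shows "x \<in> a"
proof (rule ccontr)
  assume "x \<notin> a"
  have inj: "injective_module sE" and md: "module sE"
    using assms(2) unfolding injective_hull_residue_def injective_module_def by blast+
  obtain e0 where e0: "e0 \<noteq> 0" "{r. sE r e0 = 0} = m"
    using assms(2) unfolding injective_hull_residue_def by blast
  have "{t. t * x \<in> a} \<noteq> UNIV" using \<open>x \<notin> a\<close> by (metis UNIV_I mem_Collect_eq mult_1)
  then have "{t. t * x \<in> a} \<subseteq> m"
    using local_ring_proper_ideal_le[OF assms(1) ideal_colon[OF a(1)]] by blast
  then obtain e' where e': "sE x e' = e0" "\<forall>u\<in>a. sE u e' = 0"
    using injective_module_ann_colon[OF inj a(1)] e0(2) by blast
  have "fdelta (1 * x ^ p, e') \<in> tensor_rel p sE UNIV"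
    using a(2) e'(2) \<open>x ^ p \<in> a\<close> unfolding fully_PhiE_special_def
    by (metis mult_1 power_one_right)
  then have "fdelta (1, e0) \<in> tensor_rel p sE UNIV"
    using tensor_rel_bal_transfer e'(1) by fastforce
  then show False using F_pure_tensor_one_eq_zero[OF assms(3) md] e0(1) by blast
qed

lemma root_closed_imp_radical_ideal:
  fixes a :: "'a::comm_ring_1 set"
  assumes "1 < p" "ideal a" and root: "\<And>x. x ^ p \<in> a \<Longrightarrow> x \<in> a"
  shows "radical_ideal a"
proof -
  have iter: "x ^ (p ^ k) \<in> a \<Longrightarrow> x \<in> a" for x k
  proof (induction k arbitrary: x)
    case (Suc k)
    then have "(x ^ p) ^ (p ^ k) \<in> a" by (simp add: power_mult mult.commute)
    then show ?case using Suc.IH root by blast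
  qed simp
  have "x \<in> a" if "x ^ n \<in> a" for x n
  proof -
    have "n \<le> p ^ n" using assms(1) by (simp add: less_imp_le self_le_ge2_pow)
    then have "x ^ (p ^ n) = x ^ (p ^ n - n) * x ^ n" by (simp flip: power_add)
    then show ?thesis using iter ideal_mult_left[OF assms(2) that] by metis
  qed
  then show ?thesis unfolding radical_ideal_def by (auto intro: exI[of _ 1])
qed

text \<open>Positivity of \<open>p\<close> is what gives \<open>r y\<^sup>q \<in> \<aa>\<close> for \<open>q = p\<^sup>n\<close> and \<open>r \<in> (\<aa> : y)\<close>.\<close>
lemma fully_PhiE_special_colon:
  fixes sE :: "'a::comm_ring_1 \<Rightarrow> 'e::ab_group_add \<Rightarrow> 'e"
  assumes "0 < p" "injective_module sE" "ideal a" "fully_PhiE_special p sE a"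
  shows "fully_PhiE_special p sE {r. r * y \<in> a}"
  unfolding fully_PhiE_special_def
proof (intro allI impI ballI)
  fix e n r assume "\<forall>t\<in>{r. r * y \<in> a}. sE t e = 0" and r: "r \<in> {r. r * y \<in> a}"
  then obtain e' where e': "sE y e' = e" "\<forall>u\<in>a. sE u e' = 0"
    using injective_module_ann_colon[OF assms(2,3)] by blast
  have "r * y ^ (p ^ n) = (r * y) * y ^ (p ^ n - 1)"
    using assms(1) by (simp add: mult.assoc flip: power_Suc)
  then have "r * y ^ (p ^ n) \<in> a" using r ideal_mult_right[OF assms(3)] by simp
  then have "fdelta (r * y ^ (p ^ n), e') \<in> tensor_rel (p ^ n) sE UNIV"
    using assms(4) e'(2) unfolding fully_PhiE_special_def by blast
  then show "fdelta (r, e) \<in> tensor_rel (p ^ n) sE UNIV"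
    using tensor_rel_bal_transfer e'(1) by fastforce
qed

theorem lemma1p8:
  fixes p :: nat and m :: "'a::comm_ring_1 set"
    and sE :: "'a \<Rightarrow> 'e::ab_group_add \<Rightarrow> 'e" and a :: "'a set"
  assumes "prime p" and "CHAR('a) = p"
    and "noetherian_ring TYPE('a)" and "local_ring m"
    and "injective_hull_residue m sE"
    and "F_pure p TYPE('a) TYPE('e)"
    and "ideal a" and "fully_PhiE_special p sE a"
  shows "radical_ideal a \<and> (\<forall>P \<in> associated_primes a. fully_PhiE_special p sE P)"
proof
  show "radical_ideal a"
    using root_closed_imp_radical_ideal[OF prime_gt_1_nat[OF assms(1)] assms(7)]
      fully_PhiE_special_root_closed[OF assms(4-8)] by blast
  have "injective_module sE"
    using assms(5) unfolding injective_hull_residue_def by blast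
  then show "\<forall>P \<in> associated_primes a. fully_PhiE_special p sE P"
    using fully_PhiE_special_colon[OF prime_gt_0_nat[OF assms(1)] _ assms(7,8)]
    unfolding associated_primes_def by blast
qed

end
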